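(* Work on $\mathbb{C}^3$ with coordinates $X=(z,w^{\dot 1},w^{\dot 2})$, and let the "defect" be the complex line $\{w^{\dot 1}=w^{\dot 2}=0\}$, whose points are written $Y=(z_Y,0,0)$. For $X$ a bulk point and $Y$ a defect point, define the $(0,2)$-form $$\bar\omega_{XY}=(\bar z-\bar z_{Y})\,[d\bar w\wedge d\bar w]-2\,d(\bar z-\bar z_{Y})\wedge[\bar w\, d\bar w],$$ and the bulk-to-defect propagator $$\mathcal{K}(X,Y)=-\frac{\bar\omega_{XY}}{\pi^3\big(|z-z_Y|^2+|w^{\dot 1}|^2+|w^{\dot 2}|^2\big)^3}.$$ Then for any two defect points $Y_1=(z_1,0,0)$ and $Y_2=(z_2,0,0)$ (with $z_1,z_2$ treated either as fixed or as additional complex variables), the wedge product satisfies $$\mathcal{K}(X,Y_1)\wedge\mathcal{K}(X,Y_2)=0$$ wherever it is defined. Consequently, any bulk/defect Feynman diagram whose integrand contains two bulk-to-defect propagators attached to the same bulk vertex $X$ and ending on the defect (i.e. forming a triangle with the defect) vanishes.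
   Context: Spinor brackets: for two-component objects $a^{\dot\alpha},b^{\dot\alpha}$, $[a\,b]=a^{\dot\alpha}b_{\dot\alpha}$ with indices lowered by $w_{\dot\alpha}=w^{\dot\beta}\epsilon_{\dot\beta\dot\alpha}$, where $\epsilon$ is antisymmetric with $\epsilon^{\dot 1\dot 2}=1$; thus $[d\bar w\wedge d\bar w]$ is a nonzero multiple of $d\bar w^{\dot 1}\wedge d\bar w^{\dot 2}$ and $[\bar w\,d\bar w]$ is a multiple of $\bar w^{\dot 1}d\bar w^{\dot 2}-\bar w^{\dot 2}d\bar w^{\dot 1}$. The propagator $\mathcal{K}$ is the limit of the regularized propagator of the $(0,1)$-form gauge field of holomorphic Chern–Simons/BF type theories on twistor space in the gauge $\bar\partial^\dagger\mathsf{A}=0$, with one endpoint placed on the defect; diagrams are integrals of wedge products of such propagators, vertices and external fields over bulk and defect points. *)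

theory Defs
  imports Complex_Main
begin

text \<open>Pointwise model of the antiholomorphic exterior algebra.  A form (at a fixed point)
is given by its coefficients: the coefficient of index set S (a finite set of generator
indices, taken in increasing order) is the coefficient of the basis monomial
d\<bar>x_{i1} wedge ... wedge d\<bar>x_{ik} with i1 < ... < ik.
Generators: 0 = d(conj z), 1 = d(conj w^1), 2 = d(conj w^2),
3 = d(conj z_1), 4 = d(conj z_2)  (the latter two used when z_1, z_2 are variables).\<close>

type_synonym form = "nat set \<Rightarrow> complex"

definition zero_form :: form where
  "zero_form = (\<lambda>S. 0)"

definition fadd :: "form \<Rightarrow> form \<Rightarrow> form" where
  "fadd a b = (\<lambda>S. a S + b S)"

definition fscale :: "complex \<Rightarrow> form \<Rightarrow> form" where
  "fscale c a = (\<lambda>S. c * a S)"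

definition scalar :: "complex \<Rightarrow> form" where
  "scalar c = (\<lambda>S. if S = {} then c else 0)"

definition gen :: "nat \<Rightarrow> form" where
  "gen i = (\<lambda>S. if S = {i} then 1 else 0)"

definition shuffle_sign :: "nat set \<Rightarrow> nat set \<Rightarrow> complex" where
  "shuffle_sign A B = (-1) ^ card {(i, j). i \<in> A \<and> j \<in> B \<and> j < i}"

definition wedge :: "form \<Rightarrow> form \<Rightarrow> form" where
  "wedge a b = (\<lambda>S. \<Sum>A\<in>Pow S. shuffle_sign A (S - A) * a A * b (S - A))"

text \<open>Two-component spinors (dotted index) with form-valued components.\<close>
type_synonym spinor = "form \<times> form"

definition eps :: "nat \<Rightarrow> nat \<Rightarrow> complex" where
  "eps a b = (if a = 1 \<and> b = 2 then 1 else if a = 2 \<and> b = 1 then -1 else 0)"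

definition comp :: "spinor \<Rightarrow> nat \<Rightarrow> form" where
  "comp s a = (if a = 1 then fst s else snd s)"

text \<open>lowered component w_a = w^b eps_{b a}\<close>
definition lower :: "spinor \<Rightarrow> nat \<Rightarrow> form" where
  "lower s a = fadd (fscale (eps 1 a) (comp s 1)) (fscale (eps 2 a) (comp s 2))"

text \<open>[a b] = a^a wedge b_a\<close>
definition bracket :: "spinor \<Rightarrow> spinor \<Rightarrow> form" where
  "bracket a b = fadd (wedge (comp a 1) (lower b 1)) (wedge (comp a 2) (lower b 2))"

definition dwbar :: spinor where
  "dwbar = (gen 1, gen 2)"

definition wbar :: "complex \<Rightarrow> complex \<Rightarrow> spinor" where
  "wbar w1 w2 = (scalar (cnj w1), scalar (cnj w2))"

text \<open>omega_{XY} at X = (z,w1,w2), Y = (zY,0,0); dzYbar is the 1-form d(conj zY)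
(zero_form if zY is fixed, a generator if zY is a variable).\<close>
definition omega :: "complex \<Rightarrow> complex \<Rightarrow> complex \<Rightarrow> complex \<Rightarrow> form \<Rightarrow> form" where
  "omega z w1 w2 zY dzYbar =
     fadd (fscale (cnj z - cnj zY) (bracket dwbar dwbar))
          (fscale (-2) (wedge (fadd (gen 0) (fscale (-1) dzYbar)) (bracket (wbar w1 w2) dwbar)))"

definition prop_K :: "complex \<Rightarrow> complex \<Rightarrow> complex \<Rightarrow> complex \<Rightarrow> form \<Rightarrow> form" where
  "prop_K z w1 w2 zY dzYbar =
     fscale (- 1 / complex_of_real (pi ^ 3 * ((cmod (z - zY))\<^sup>2 + (cmod w1)\<^sup>2 + (cmod w2)\<^sup>2) ^ 3))
            (omega z w1 w2 zY dzYbar)"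

end

theory Submission
  imports Defs
begin

(* Write mu = [dwbar dwbar], a multiple of dwbar^1 /\ dwbar^2, and theta = [wbar dwbar], a 1-form in
   dwbar^1, dwbar^2 that depends on the bulk point X only.  Then
   omega_XY = (conj z - conj z_Y) mu - 2 d(conj z - conj z_Y) /\ theta, and in the product of two such
   forms every term either contains three factors from the two-dimensional span of dwbar^1, dwbar^2
   or, after reordering by associativity and graded commutativity, contains theta /\ theta. *)

definition homogeneous :: "nat \<Rightarrow> form \<Rightarrow> bool" where
  "homogeneous p a \<longleftrightarrow> (\<forall>S. a S \<noteq> 0 \<longrightarrow> finite S \<and> card S = p)"

definition monomial :: "nat set \<Rightarrow> form" where
  "monomial P = (\<lambda>S. if S = P then 1 else 0)"

lemma fscale_zero_form [simp]: "fscale k zero_form = zero_form"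
  by (simp add: fscale_def zero_form_def)

lemma fscale_zero [simp]: "fscale 0 a = zero_form"
  by (simp add: fscale_def zero_form_def)

lemma fscale_one [simp]: "fscale 1 a = a"
  by (simp add: fscale_def)

lemma fadd_zero_form [simp]: "fadd zero_form a = a" "fadd a zero_form = a"
  by (simp_all add: fadd_def zero_form_def)

lemma wedge_zero_form [simp]: "wedge zero_form a = zero_form" "wedge a zero_form = zero_form"
  by (simp_all add: wedge_def zero_form_def)

lemma wedge_fadd_left: "wedge (fadd a b) c = fadd (wedge a c) (wedge b c)"
  and wedge_fadd_right: "wedge c (fadd a b) = fadd (wedge c a) (wedge c b)"
  by (simp_all add: wedge_def fadd_def algebra_simps sum.distrib)

lemma wedge_fscale_left: "wedge (fscale k a) b = fscale k (wedge a b)"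
  and wedge_fscale_right: "wedge b (fscale k a) = fscale k (wedge b a)"
  by (simp_all add: wedge_def fscale_def algebra_simps sum_distrib_left)

lemma finite_inversions: "finite A \<Longrightarrow> finite {(i, j). i \<in> A \<and> j \<in> B \<and> j < (i::nat)}"
  by (rule finite_subset[of _ "Sigma A (\<lambda>i. {..<i})"]) auto

lemma shuffle_sign_Un_left:
  assumes "finite A" "finite B" "A \<inter> B = {}"
  shows "shuffle_sign (A \<union> B) C = shuffle_sign A C * shuffle_sign B C"
proof -
  have "{(i, j). i \<in> A \<union> B \<and> j \<in> C \<and> j < i}
      = {(i, j). i \<in> A \<and> j \<in> C \<and> j < i} \<union> {(i, j). i \<in> B \<and> j \<in> C \<and> j < i}"
    by auto
  moreover have "card \<dots> = card {(i, j). i \<in> A \<and> j \<in> C \<and> j < i} + card {(i, j). i \<in> B \<and> j \<in> C \<and> j < i}"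
    using assms by (intro card_Un_disjoint) (auto simp: finite_inversions)
  ultimately show ?thesis
    by (simp add: shuffle_sign_def power_add)
qed

lemma shuffle_sign_Un_right:
  assumes "finite A" "B \<inter> C = {}"
  shows "shuffle_sign A (B \<union> C) = shuffle_sign A B * shuffle_sign A C"
proof -
  have "{(i, j). i \<in> A \<and> j \<in> B \<union> C \<and> j < i}
      = {(i, j). i \<in> A \<and> j \<in> B \<and> j < i} \<union> {(i, j). i \<in> A \<and> j \<in> C \<and> j < i}"
    by auto
  moreover have "card \<dots> = card {(i, j). i \<in> A \<and> j \<in> B \<and> j < i} + card {(i, j). i \<in> A \<and> j \<in> C \<and> j < i}"
    using assms by (intro card_Un_disjoint) (auto simp: finite_inversions)
  ultimately show ?thesis
    by (simp add: shuffle_sign_def power_add)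
qed

lemma shuffle_sign_assoc:
  assumes "finite B" "finite C" "B \<inter> C = {}" "C \<inter> D = {}"
  shows "shuffle_sign B C * shuffle_sign (B \<union> C) D = shuffle_sign B (C \<union> D) * shuffle_sign C D"
  using assms by (simp add: shuffle_sign_Un_left shuffle_sign_Un_right mult_ac)

lemma shuffle_sign_swap:
  assumes "finite A" "finite B" "A \<inter> B = {}"
  shows "shuffle_sign B A = (-1) ^ (card A * card B) * shuffle_sign A B"
proof -
  let ?I = "{(i, j). i \<in> A \<and> j \<in> B \<and> j < i}" and ?J = "{(i, j). i \<in> B \<and> j \<in> A \<and> j < i}"
  have "A \<times> B = ?I \<union> prod.swap ` ?J"
    using assms(3) by (auto simp: image_iff)
  moreover have "?I \<inter> prod.swap ` ?J = {}"
    by auto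
  moreover have "finite ?I" "finite (prod.swap ` ?J)"
    using assms by (simp_all add: finite_inversions)
  ultimately have "card A * card B = card ?I + card (prod.swap ` ?J)"
    by (simp add: card_Un_disjoint flip: card_cartesian_product)
  also have "card (prod.swap ` ?J) = card ?J"
    by (simp add: card_image)
  finally have "card A * card B = card ?I + card ?J" .
  moreover have "(-1::complex) ^ n * (-1) ^ n = 1" for n
    by (simp flip: power_mult_distrib)
  ultimately show ?thesis
    by (simp add: shuffle_sign_def power_add)
qed

lemma shuffle_sign_singletons: "shuffle_sign {i} {j} = (if j < i then -1 else 1)"
proof -
  have "{(i', j'). i' \<in> {i} \<and> j' \<in> {j} \<and> j' < i'} = (if j < i then {(i, j)} else {})"
    by auto
  then show ?thesis
    by (simp add: shuffle_sign_def)
qed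

lemma wedge_assoc: "wedge (wedge a b) c = wedge a (wedge b c)"
proof
  fix S
  show "wedge (wedge a b) c S = wedge a (wedge b c) S"
  proof (cases "finite S")
    case False
    then show ?thesis
      by (simp add: wedge_def)
  next
    case True
    define f where "f B C = shuffle_sign B C * shuffle_sign (B \<union> C) (S - B - C) * a B * b C * c (S - B - C)"
      for B C
    have "wedge (wedge a b) c S = (\<Sum>A\<in>Pow S. \<Sum>B\<in>Pow A. f B (A - B))"
    proof -
      have "B \<union> (A - B) = A" "S - B - (A - B) = S - A" if "A \<subseteq> S" "B \<subseteq> A" for A B
        using that by auto
      then show ?thesis
        unfolding wedge_def f_def sum_distrib_left sum_distrib_right
        by (intro sum.cong refl) (simp add: mult_ac)
    qed
    also have "\<dots> = (\<Sum>A\<in>Pow S. \<Sum>B\<in>{B. B \<in> Pow S \<and> B \<subseteq> A}. f B (A - B))"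
      by (intro sum.cong refl) auto
    also have "\<dots> = (\<Sum>B\<in>Pow S. \<Sum>A\<in>{A. A \<in> Pow S \<and> B \<subseteq> A}. f B (A - B))"
      using True by (intro sum.swap_restrict) simp_all
    also have "\<dots> = (\<Sum>B\<in>Pow S. \<Sum>C\<in>Pow (S - B). f B C)"
    proof (rule sum.cong [OF refl])
      fix B
      assume "B \<in> Pow S"
      then show "(\<Sum>A | A \<in> Pow S \<and> B \<subseteq> A. f B (A - B)) = (\<Sum>C\<in>Pow (S - B). f B C)"
        by (intro sum.reindex_bij_witness[of _ "\<lambda>C. B \<union> C" "\<lambda>A. A - B"]) auto
    qed
    also have "\<dots> = wedge a (wedge b c) S"
    proof -
      have "f B C = shuffle_sign B (S - B) * a B * (shuffle_sign C (S - B - C) * b C * c (S - B - C))"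
        if "B \<subseteq> S" "C \<subseteq> S - B" for B C
      proof -
        have "C \<union> (S - B - C) = S - B" "finite B" "finite C"
          using that True by (auto intro: finite_subset)
        then have sign: "shuffle_sign B C * shuffle_sign (B \<union> C) (S - B - C)
            = shuffle_sign B (S - B) * shuffle_sign C (S - B - C)"
          using that shuffle_sign_assoc[of B C "S - B - C"] by auto
        have "f B C = (shuffle_sign B C * shuffle_sign (B \<union> C) (S - B - C)) * (a B * b C * c (S - B - C))"
          by (simp add: f_def mult_ac)
        also have "\<dots> = (shuffle_sign B (S - B) * shuffle_sign C (S - B - C)) * (a B * b C * c (S - B - C))"
          by (simp only: sign)
        finally show ?thesis
          by (simp add: mult_ac)
      qed
      then show ?thesis
        unfolding wedge_def sum_distrib_left
        by (intro sum.cong refl) (auto simp: mult_ac)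
    qed
    finally show ?thesis .
  qed
qed

lemma wedge_commute:
  assumes "homogeneous p a" "homogeneous q b"
  shows "wedge b a = fscale ((-1) ^ (p * q)) (wedge a b)"
proof
  fix S
  show "wedge b a S = fscale ((-1) ^ (p * q)) (wedge a b) S"
  proof (cases "finite S")
    case False
    then show ?thesis
      by (simp add: wedge_def fscale_def)
  next
    case True
    have "wedge b a S = (\<Sum>A\<in>Pow S. shuffle_sign (S - A) A * b (S - A) * a A)"
      unfolding wedge_def
      by (rule sum.reindex_bij_witness[of _ "\<lambda>A. S - A" "\<lambda>A. S - A"]) (auto simp: double_diff)
    also have "\<dots> = (\<Sum>A\<in>Pow S. (-1) ^ (p * q) * (shuffle_sign A (S - A) * a A * b (S - A)))"
    proof (rule sum.cong [OF refl])
      fix A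
      assume "A \<in> Pow S"
      show "shuffle_sign (S - A) A * b (S - A) * a A
          = (-1) ^ (p * q) * (shuffle_sign A (S - A) * a A * b (S - A))"
      proof (cases "a A = 0 \<or> b (S - A) = 0")
        case False
        then have "finite A" "card A = p" "card (S - A) = q"
          using assms by (auto simp: homogeneous_def)
        then show ?thesis
          using True shuffle_sign_swap[of A "S - A"] by simp
      qed auto
    qed
    also have "\<dots> = fscale ((-1) ^ (p * q)) (wedge a b) S"
      by (simp add: wedge_def fscale_def sum_distrib_left)
    finally show ?thesis .
  qed
qed

lemma wedge_self_eq_zero:
  assumes "homogeneous p a" "odd p"
  shows "wedge a a = zero_form"
proof
  fix S
  have "wedge a a S = - wedge a a S"
    using fun_cong[OF wedge_commute[OF assms(1) assms(1)], of S] assms(2) by (simp add: fscale_def)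
  then show "wedge a a S = zero_form S"
    by (simp add: zero_form_def)
qed

lemma homogeneous_zero_form: "homogeneous p zero_form"
  by (simp add: homogeneous_def zero_form_def)

lemma homogeneous_fadd: "homogeneous p a \<Longrightarrow> homogeneous p b \<Longrightarrow> homogeneous p (fadd a b)"
  by (simp add: homogeneous_def fadd_def) (metis add.right_neutral)

lemma homogeneous_fscale: "homogeneous p a \<Longrightarrow> homogeneous p (fscale k a)"
  by (simp add: homogeneous_def fscale_def)

lemma homogeneous_monomial: "finite P \<Longrightarrow> card P = p \<Longrightarrow> homogeneous p (monomial P)"
  by (simp add: homogeneous_def monomial_def)

lemma gen_eq_monomial: "gen i = monomial {i}"
  by (simp add: gen_def monomial_def)

lemma scalar_eq_monomial: "scalar c = fscale c (monomial {})"
  by (auto simp: scalar_def monomial_def fscale_def)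

lemma wedge_monomial:
  assumes "finite P" "finite Q"
  shows "wedge (monomial P) (monomial Q)
    = (if P \<inter> Q = {} then fscale (shuffle_sign P Q) (monomial (P \<union> Q)) else zero_form)"
proof
  fix S
  show "wedge (monomial P) (monomial Q) S
    = (if P \<inter> Q = {} then fscale (shuffle_sign P Q) (monomial (P \<union> Q)) else zero_form) S"
  proof (cases "finite S")
    case False
    then have "S \<noteq> P \<union> Q"
      using assms by auto
    with False show ?thesis
      by (simp add: wedge_def fscale_def monomial_def zero_form_def)
  next
    case True
    have "wedge (monomial P) (monomial Q) S
        = (\<Sum>A\<in>Pow S. if A = P then shuffle_sign A (S - A) * monomial Q (S - A) else 0)"
      unfolding wedge_def by (rule sum.cong) (auto simp: monomial_def)
    also have "\<dots> = (if P \<subseteq> S then shuffle_sign P (S - P) * monomial Q (S - P) else 0)"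
      using True by (simp add: sum.delta')
    also have "\<dots> = (if P \<inter> Q = {} then fscale (shuffle_sign P Q) (monomial (P \<union> Q)) else zero_form) S"
      by (auto simp: monomial_def fscale_def zero_form_def)
    finally show ?thesis .
  qed
qed

lemma bracket_eq: "bracket a b = fadd (fscale (-1) (wedge (fst a) (snd b))) (wedge (snd a) (fst b))"
  by (simp add: bracket_def lower_def comp_def eps_def wedge_fscale_right)

lemma bracket_dwbar_dwbar: "bracket dwbar dwbar = fscale (-2) (monomial {1, 2})"
  by (auto simp: bracket_eq dwbar_def gen_eq_monomial wedge_monomial shuffle_sign_singletons
      insert_commute fadd_def fscale_def)

lemma bracket_wbar_dwbar:
  "bracket (wbar w1 w2) dwbar = fadd (fscale (- cnj w1) (monomial {2})) (fscale (cnj w2) (monomial {1}))"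
proof -
  have "wedge (monomial {}) (monomial {i}) = monomial {i}" for i
    by (simp add: wedge_monomial shuffle_sign_def)
  then show ?thesis
    by (simp add: bracket_eq wbar_def dwbar_def gen_eq_monomial scalar_eq_monomial wedge_fscale_left)
      (auto simp: fadd_def fscale_def)
qed

lemma wedge_eq_zero_of_common_factor:
  assumes hom_\<mu>: "homogeneous 2 \<mu>" and hom_\<theta>: "homogeneous 1 \<theta>"
    and hom_\<alpha>: "homogeneous 1 \<alpha>" and hom_\<beta>: "homogeneous 1 \<beta>"
    and \<mu>_\<mu>: "wedge \<mu> \<mu> = zero_form" and \<mu>_\<theta>: "wedge \<mu> \<theta> = zero_form"
  shows "wedge (fadd (fscale a \<mu>) (fscale c (wedge \<alpha> \<theta>))) (fadd (fscale b \<mu>) (fscale d (wedge \<beta> \<theta>)))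
    = zero_form"
proof -
  have \<mu>_left: "wedge \<mu> (wedge \<beta> \<theta>) = zero_form"
  proof -
    have "wedge \<mu> (wedge \<beta> \<theta>) = wedge (wedge \<mu> \<beta>) \<theta>"
      by (simp add: wedge_assoc)
    also have "\<dots> = wedge (wedge \<beta> \<mu>) \<theta>"
      using wedge_commute[OF hom_\<beta> hom_\<mu>] by simp
    also have "\<dots> = zero_form"
      by (simp add: wedge_assoc \<mu>_\<theta>)
    finally show ?thesis .
  qed
  have \<mu>_right: "wedge (wedge \<alpha> \<theta>) \<mu> = zero_form"
    using wedge_commute[OF hom_\<mu> hom_\<theta>] by (simp add: wedge_assoc \<mu>_\<theta>)
  have \<theta>_\<theta>: "wedge \<theta> \<theta> = zero_form"
    using hom_\<theta> by (rule wedge_self_eq_zero) simp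
  have \<theta>_twice: "wedge (wedge \<alpha> \<theta>) (wedge \<beta> \<theta>) = zero_form"
  proof -
    have "wedge (wedge \<alpha> \<theta>) (wedge \<beta> \<theta>) = wedge \<alpha> (wedge (wedge \<theta> \<beta>) \<theta>)"
      by (simp add: wedge_assoc)
    also have "\<dots> = fscale (-1) (wedge \<alpha> (wedge \<beta> (wedge \<theta> \<theta>)))"
      using wedge_commute[OF hom_\<beta> hom_\<theta>] by (simp add: wedge_assoc wedge_fscale_left wedge_fscale_right)
    also have "\<dots> = zero_form"
      by (simp add: \<theta>_\<theta>)
    finally show ?thesis .
  qed
  show ?thesis
    by (simp add: wedge_fadd_left wedge_fadd_right wedge_fscale_left wedge_fscale_right
        \<mu>_\<mu> \<mu>_left \<mu>_right \<theta>_twice)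
qed

lemma wedge_omega_omega:
  assumes "homogeneous 1 dz1" "homogeneous 1 dz2"
  shows "wedge (omega z w1 w2 z1 dz1) (omega z w1 w2 z2 dz2) = zero_form"
proof -
  define \<mu> where "\<mu> = bracket dwbar dwbar"
  define \<theta> where "\<theta> = bracket (wbar w1 w2) dwbar"
  define dZ where "dZ dz = fadd (gen 0) (fscale (-1) dz)" for dz
  have omega_eq: "omega z w1 w2 zY dz = fadd (fscale (cnj z - cnj zY) \<mu>) (fscale (-2) (wedge (dZ dz) \<theta>))"
    for zY dz
    by (simp add: omega_def \<mu>_def \<theta>_def dZ_def)
  have "homogeneous 2 \<mu>"
    by (simp add: \<mu>_def bracket_dwbar_dwbar homogeneous_fscale homogeneous_monomial)
  moreover have "homogeneous 1 \<theta>"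
    by (simp add: \<theta>_def bracket_wbar_dwbar homogeneous_fadd homogeneous_fscale homogeneous_monomial)
  moreover have "homogeneous 1 (dZ dz)" if "homogeneous 1 dz" for dz
    using that by (simp add: dZ_def gen_eq_monomial homogeneous_fadd homogeneous_fscale homogeneous_monomial)
  moreover have "wedge \<mu> \<mu> = zero_form"
    by (simp add: \<mu>_def bracket_dwbar_dwbar wedge_fscale_left wedge_fscale_right wedge_monomial)
  moreover have "wedge \<mu> \<theta> = zero_form"
    by (simp add: \<mu>_def \<theta>_def bracket_dwbar_dwbar bracket_wbar_dwbar wedge_fadd_right
        wedge_fscale_left wedge_fscale_right wedge_monomial)
  ultimately show ?thesis
    unfolding omega_eq using assms by (intro wedge_eq_zero_of_common_factor)
qed

theorem lemma1:
  fixes z w1 w2 z1 z2 :: complex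
  assumes "(z, w1, w2) \<noteq> (z1, 0, 0)" and "(z, w1, w2) \<noteq> (z2, 0, 0)"
  shows "wedge (prop_K z w1 w2 z1 (gen 3)) (prop_K z w1 w2 z2 (gen 4)) = zero_form
       \<and> wedge (prop_K z w1 w2 z1 zero_form) (prop_K z w1 w2 z2 zero_form) = zero_form"
proof -
  (* The hypotheses only keep X off the pole of the prefactor. *)
  have "homogeneous 1 (gen i)" for i
    by (simp add: gen_eq_monomial homogeneous_monomial)
  then have "wedge (omega z w1 w2 z1 (gen 3)) (omega z w1 w2 z2 (gen 4)) = zero_form"
      "wedge (omega z w1 w2 z1 zero_form) (omega z w1 w2 z2 zero_form) = zero_form"
    by (simp_all add: wedge_omega_omega homogeneous_zero_form)
  then show ?thesis
    unfolding prop_K_def by (simp add: wedge_fscale_left wedge_fscale_right)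
qed

end
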